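(* Let $\phi:(\mathcal S,E)\to(\mathcal S',E')$ be an isomorphism of information structures, let $Q$ and $Q'$ be adapted probability functors on $\mathcal S$ and $\mathcal S'$, and suppose $Q'_{\phi(X)}=m_X(Q_X)$ for every $X\in\mathrm{Ob}\,\mathcal S$. Then for every $\alpha>0$ the induced map $\phi^*:H^\bullet(\mathcal S',F_\alpha(Q'))\to H^\bullet(\mathcal S,F_\alpha(Q))$, given on cochains by $(\phi^*f)_Y[X_1|\dots|X_n](P)=f_{\phi(Y)}[\phi(X_1)|\dots|\phi(X_n)](m_Y(P))$, is an isomorphism.
   Context: An information structure is a pair $(\mathcal S,E)$ with $\mathcal S$ a small poset category with terminal object $\mathbf 1$ and finite-dimensional nerve, in which $XY:=X\wedge Y$ exists whenever $X,Y$ have a common refinement, and $E:\mathcal S\to\mathcal{Sets}$ a functor with $E(\mathbf 1)$ a singleton, $E(\pi)$ a strict surjection for non-identity $\pi$, $|E(\pi)^{-1}(x)\cap E(\sigma)^{-1}(y)|\le1$ for product diagrams $X\xleftarrow{\pi}X\wedge Y\xrightarrow{\sigma}Y$, and every $x\in E(X)$ the $X$-component of some element of $\lim E$. A morphism $\phi=(\phi_0,\phi^\#)$ is a functor $\phi_0$ (written $\phi$) preserving $\mathbf 1$ and existing products, with a natural transformation $\phi^\#:E\Rightarrow E'\circ\phi_0$ with surjective components; composition is componentwise, and an isomorphism is a morphism with a two-sided inverse. $\mathcal S_X=\{Y:X\to Y\}$. A probability functor $Q$ gives simplicial subcomplexes $Q_X$ of the simplex $\Delta(X)$ of laws on $E(X)$,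 with marginalization $\pi_*P(y)=\sum_{x\in E(\pi)^{-1}(y)}P(x)$; $Q$ adapted means stable under conditioning $P|_{Y=y}$ ($P|_{Y=y}(x)=P(x)/\pi_*P(y)$ if $E(\pi)(x)=y$, else $0$). $m_X(P)(x')=\sum_{x\in(\phi^\#_X)^{-1}(x')}P(x)$. $F_\alpha(Q_X)$: measurable functions on $Q_X$ with action $(Y.f)(P)=\sum_yP(Y=y)^\alpha f(P|_{Y=y})$. Cochains: families $f_X[X_1|\dots|X_n]$ of measurable functions on $Q_X$, $X_i\in\mathcal S_X$, jointly local ($f_X[\dots](P)=f_Y[\dots](\pi_*P)$ for $\pi:X\to Y$, $X_i\in\mathcal S_Y$), with coboundary $(\delta f)[X_1|\dots|X_{n+1}]=X_1.f[X_2|\dots|X_{n+1}]+\sum_{k=1}^n(-1)^kf[X_1|\dots|X_kX_{k+1}|\dots|X_{n+1}]+(-1)^{n+1}f[X_1|\dots|X_n]$; $H^\bullet(\mathcal S,F_\alpha(Q))$ is its cohomology (equal to $\mathrm{Ext}^\bullet(\mathbb R_{\mathcal S},F_\alpha(Q))$). *)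

theory Defs
  imports "HOL-Analysis.Analysis"
begin

(* A poset category S is given by a set of objects S and a relation le,
   where "le X Y" means there is a (unique) arrow X -> Y (Y coarser than X). *)

definition is_pmeet :: "'a set \<Rightarrow> ('a \<Rightarrow> 'a \<Rightarrow> bool) \<Rightarrow> 'a \<Rightarrow> 'a \<Rightarrow> 'a \<Rightarrow> bool" where
  "is_pmeet S le X Y W \<longleftrightarrow> W \<in> S \<and> le W X \<and> le W Y \<and> (\<forall>V\<in>S. le V X \<and> le V Y \<longrightarrow> le V W)"

definition pmeet :: "'a set \<Rightarrow> ('a \<Rightarrow> 'a \<Rightarrow> bool) \<Rightarrow> 'a \<Rightarrow> 'a \<Rightarrow> 'a" where
  "pmeet S le X Y = (THE W. is_pmeet S le X Y W)"

definition common_refinement :: "'a set \<Rightarrow> ('a \<Rightarrow> 'a \<Rightarrow> bool) \<Rightarrow> 'a \<Rightarrow> 'a \<Rightarrow> bool" where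
  "common_refinement S le X Y \<longleftrightarrow> (\<exists>Z\<in>S. le Z X \<and> le Z Y)"

definition coarser :: "'a set \<Rightarrow> ('a \<Rightarrow> 'a \<Rightarrow> bool) \<Rightarrow> 'a \<Rightarrow> 'a set" where
  "coarser S le X = {Y \<in> S. le X Y}"

definition lim_E :: "'a set \<Rightarrow> ('a \<Rightarrow> 'a \<Rightarrow> bool) \<Rightarrow> ('a \<Rightarrow> 'b set) \<Rightarrow> ('a \<Rightarrow> 'a \<Rightarrow> 'b \<Rightarrow> 'b)
    \<Rightarrow> ('a \<Rightarrow> 'b) set" where
  "lim_E S le E Emap = {s. (\<forall>Y\<in>S. s Y \<in> E Y) \<and> (\<forall>Y\<in>S. \<forall>Z\<in>S. le Y Z \<longrightarrow> Emap Y Z (s Y) = s Z)}"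

definition info_structure ::
  "'a set \<Rightarrow> ('a \<Rightarrow> 'a \<Rightarrow> bool) \<Rightarrow> 'a \<Rightarrow> ('a \<Rightarrow> 'b set) \<Rightarrow> ('a \<Rightarrow> 'a \<Rightarrow> 'b \<Rightarrow> 'b) \<Rightarrow> bool" where
  "info_structure S le one E Emap \<longleftrightarrow>
     \<comment> \<open>poset category\<close>
     (\<forall>X\<in>S. le X X) \<and>
     (\<forall>X\<in>S. \<forall>Y\<in>S. le X Y \<and> le Y X \<longrightarrow> X = Y) \<and>
     (\<forall>X\<in>S. \<forall>Y\<in>S. \<forall>Z\<in>S. le X Y \<and> le Y Z \<longrightarrow> le X Z) \<and>
     \<comment> \<open>terminal object\<close>
     one \<in> S \<and> (\<forall>X\<in>S. le X one) \<and>
     \<comment> \<open>finite-dimensional nerve: bounded length of chains of non-identity arrows\<close>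
     (\<exists>N::nat. \<forall>xs. set xs \<subseteq> S \<and> sorted_wrt (\<lambda>A B. le A B \<and> A \<noteq> B) xs \<longrightarrow> length xs \<le> N) \<and>
     \<comment> \<open>products exist whenever there is a common refinement\<close>
     (\<forall>X\<in>S. \<forall>Y\<in>S. common_refinement S le X Y \<longrightarrow> (\<exists>W. is_pmeet S le X Y W)) \<and>
     \<comment> \<open>E is a functor to Sets\<close>
     (\<forall>X\<in>S. \<forall>Y\<in>S. le X Y \<longrightarrow> (\<forall>x\<in>E X. Emap X Y x \<in> E Y)) \<and>
     (\<forall>X\<in>S. \<forall>x\<in>E X. Emap X X x = x) \<and>
     (\<forall>X\<in>S. \<forall>Y\<in>S. \<forall>Z\<in>S. le X Y \<and> le Y Z \<longrightarrow>
        (\<forall>x\<in>E X. Emap X Z x = Emap Y Z (Emap X Y x))) \<and>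
     \<comment> \<open>E(1) is a singleton\<close>
     (\<exists>e. E one = {e}) \<and>
     \<comment> \<open>E(pi) strict surjection for non-identity pi\<close>
     (\<forall>X\<in>S. \<forall>Y\<in>S. le X Y \<and> X \<noteq> Y \<longrightarrow>
        Emap X Y ` E X = E Y \<and> \<not> inj_on (Emap X Y) (E X)) \<and>
     \<comment> \<open>product condition: at most one element over each pair\<close>
     (\<forall>X\<in>S. \<forall>Y\<in>S. common_refinement S le X Y \<longrightarrow>
        inj_on (\<lambda>z. (Emap (pmeet S le X Y) X z, Emap (pmeet S le X Y) Y z)) (E (pmeet S le X Y))) \<and>
     \<comment> \<open>every x is a component of an element of lim E\<close>
     (\<forall>X\<in>S. \<forall>x\<in>E X. \<exists>s\<in>lim_E S le E Emap. s X = x)"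

definition info_morphism ::
  "'a set \<Rightarrow> ('a \<Rightarrow> 'a \<Rightarrow> bool) \<Rightarrow> 'a \<Rightarrow> ('a \<Rightarrow> 'b set) \<Rightarrow> ('a \<Rightarrow> 'a \<Rightarrow> 'b \<Rightarrow> 'b) \<Rightarrow>
   'c set \<Rightarrow> ('c \<Rightarrow> 'c \<Rightarrow> bool) \<Rightarrow> 'c \<Rightarrow> ('c \<Rightarrow> 'd set) \<Rightarrow> ('c \<Rightarrow> 'c \<Rightarrow> 'd \<Rightarrow> 'd) \<Rightarrow>
   ('a \<Rightarrow> 'c) \<Rightarrow> ('a \<Rightarrow> 'b \<Rightarrow> 'd) \<Rightarrow> bool" where
  "info_morphism S le one E Emap S' le' one' E' Emap' phi phis \<longleftrightarrow>
     \<comment> \<open>functor on objects/arrows\<close>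
     (\<forall>X\<in>S. phi X \<in> S') \<and>
     (\<forall>X\<in>S. \<forall>Y\<in>S. le X Y \<longrightarrow> le' (phi X) (phi Y)) \<and>
     \<comment> \<open>preserves the terminal object\<close>
     phi one = one' \<and>
     \<comment> \<open>preserves existing products\<close>
     (\<forall>X\<in>S. \<forall>Y\<in>S. common_refinement S le X Y \<longrightarrow>
        is_pmeet S' le' (phi X) (phi Y) (phi (pmeet S le X Y))) \<and>
     \<comment> \<open>phi# : E => E' o phi natural with surjective components\<close>
     (\<forall>X\<in>S. phis X ` E X = E' (phi X)) \<and>
     (\<forall>X\<in>S. \<forall>Y\<in>S. le X Y \<longrightarrow>
        (\<forall>x\<in>E X. Emap' (phi X) (phi Y) (phis X x) = phis Y (Emap X Y x)))"

definition info_iso ::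
  "'a set \<Rightarrow> ('a \<Rightarrow> 'a \<Rightarrow> bool) \<Rightarrow> 'a \<Rightarrow> ('a \<Rightarrow> 'b set) \<Rightarrow> ('a \<Rightarrow> 'a \<Rightarrow> 'b \<Rightarrow> 'b) \<Rightarrow>
   'c set \<Rightarrow> ('c \<Rightarrow> 'c \<Rightarrow> bool) \<Rightarrow> 'c \<Rightarrow> ('c \<Rightarrow> 'd set) \<Rightarrow> ('c \<Rightarrow> 'c \<Rightarrow> 'd \<Rightarrow> 'd) \<Rightarrow>
   ('a \<Rightarrow> 'c) \<Rightarrow> ('a \<Rightarrow> 'b \<Rightarrow> 'd) \<Rightarrow> bool" where
  "info_iso S le one E Emap S' le' one' E' Emap' phi phis \<longleftrightarrow>
     info_morphism S le one E Emap S' le' one' E' Emap' phi phis \<and>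
     (\<exists>psi psis. info_morphism S' le' one' E' Emap' S le one E Emap psi psis \<and>
        (\<forall>X\<in>S. psi (phi X) = X) \<and> (\<forall>X'\<in>S'. phi (psi X') = X') \<and>
        (\<forall>X\<in>S. \<forall>x\<in>E X. psis (phi X) (phis X x) = x) \<and>
        (\<forall>X'\<in>S'. \<forall>x\<in>E' X'. phis (psi X') (psis X' x) = x))"

definition law_simplex :: "('a \<Rightarrow> 'b set) \<Rightarrow> 'a \<Rightarrow> ('b \<Rightarrow> real) set" where
  "law_simplex E X = {P. (\<forall>x. 0 \<le> P x) \<and> (\<forall>x. x \<notin> E X \<longrightarrow> P x = 0) \<and> sum P (E X) = 1}"

definition margl :: "('a \<Rightarrow> 'b set) \<Rightarrow> ('a \<Rightarrow> 'a \<Rightarrow> 'b \<Rightarrow> 'b) \<Rightarrow> 'a \<Rightarrow> 'a \<Rightarrow> ('b \<Rightarrow> real) \<Rightarrow> 'b \<Rightarrow> real" where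
  "margl E Emap X Y P = (\<lambda>y. if y \<in> E Y then (\<Sum>x\<in>{x \<in> E X. Emap X Y x = y}. P x) else 0)"

definition condl :: "('a \<Rightarrow> 'b set) \<Rightarrow> ('a \<Rightarrow> 'a \<Rightarrow> 'b \<Rightarrow> 'b) \<Rightarrow> 'a \<Rightarrow> 'a \<Rightarrow> ('b \<Rightarrow> real) \<Rightarrow> 'b \<Rightarrow> 'b \<Rightarrow> real" where
  "condl E Emap X Y P y = (\<lambda>x. if x \<in> E X \<and> Emap X Y x = y then P x / margl E Emap X Y P y else 0)"

definition prob_functor ::
  "'a set \<Rightarrow> ('a \<Rightarrow> 'a \<Rightarrow> bool) \<Rightarrow> ('a \<Rightarrow> 'b set) \<Rightarrow> ('a \<Rightarrow> 'a \<Rightarrow> 'b \<Rightarrow> 'b) \<Rightarrow> ('a \<Rightarrow> ('b \<Rightarrow> real) set) \<Rightarrow> bool" where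
  "prob_functor S le E Emap Q \<longleftrightarrow>
     (\<forall>X\<in>S. Q X \<subseteq> law_simplex E X \<and>
        (\<forall>P\<in>Q X. \<forall>P'\<in>law_simplex E X. {x. P' x \<noteq> 0} \<subseteq> {x. P x \<noteq> 0} \<longrightarrow> P' \<in> Q X)) \<and>
     (\<forall>X\<in>S. \<forall>Y\<in>S. le X Y \<longrightarrow> (\<forall>P\<in>Q X. margl E Emap X Y P \<in> Q Y))"

definition adapted ::
  "'a set \<Rightarrow> ('a \<Rightarrow> 'a \<Rightarrow> bool) \<Rightarrow> ('a \<Rightarrow> 'b set) \<Rightarrow> ('a \<Rightarrow> 'a \<Rightarrow> 'b \<Rightarrow> 'b) \<Rightarrow> ('a \<Rightarrow> ('b \<Rightarrow> real) set) \<Rightarrow> bool" where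
  "adapted S le E Emap Q \<longleftrightarrow>
     (\<forall>X\<in>S. \<forall>Y\<in>S. le X Y \<longrightarrow> (\<forall>P\<in>Q X. \<forall>y\<in>E Y.
        margl E Emap X Y P y \<noteq> 0 \<longrightarrow> condl E Emap X Y P y \<in> Q X))"

definition mpush :: "('a \<Rightarrow> 'b set) \<Rightarrow> ('a \<Rightarrow> 'b \<Rightarrow> 'd) \<Rightarrow> 'a \<Rightarrow> ('b \<Rightarrow> real) \<Rightarrow> 'd \<Rightarrow> real" where
  "mpush E phis X P = (\<lambda>x'. \<Sum>x\<in>{x \<in> E X. phis X x = x'}. P x)"

(* cochains: f X [X_1,...,X_n] P; extended by 0 outside the relevant domain *)
type_synonym ('a, 'b) cochain = "'a \<Rightarrow> 'a list \<Rightarrow> ('b \<Rightarrow> real) \<Rightarrow> real"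

definition cvalid ::
  "'a set \<Rightarrow> ('a \<Rightarrow> 'a \<Rightarrow> bool) \<Rightarrow> ('a \<Rightarrow> ('b \<Rightarrow> real) set) \<Rightarrow> nat \<Rightarrow> 'a \<Rightarrow> 'a list \<Rightarrow> ('b \<Rightarrow> real) \<Rightarrow> bool" where
  "cvalid S le Q n X xs P \<longleftrightarrow> X \<in> S \<and> length xs = n \<and> set xs \<subseteq> coarser S le X \<and> P \<in> Q X"

definition is_cochain ::
  "'a set \<Rightarrow> ('a \<Rightarrow> 'a \<Rightarrow> bool) \<Rightarrow> ('a \<Rightarrow> 'b set) \<Rightarrow> ('a \<Rightarrow> 'a \<Rightarrow> 'b \<Rightarrow> 'b) \<Rightarrow> ('a \<Rightarrow> ('b \<Rightarrow> real) set)
    \<Rightarrow> nat \<Rightarrow> ('a, 'b) cochain \<Rightarrow> bool" where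
  "is_cochain S le E Emap Q n f \<longleftrightarrow>
     (\<forall>X xs P. \<not> cvalid S le Q n X xs P \<longrightarrow> f X xs P = 0) \<and>
     \<comment> \<open>measurable on Q_X (Borel sets of the subspace Q_X of real-valued functions)\<close>
     (\<forall>X\<in>S. \<forall>xs. length xs = n \<and> set xs \<subseteq> coarser S le X \<longrightarrow>
        f X xs \<in> borel_measurable (restrict_space borel (Q X))) \<and>
     \<comment> \<open>joint locality\<close>
     (\<forall>X\<in>S. \<forall>Y\<in>S. le X Y \<longrightarrow> (\<forall>xs. length xs = n \<and> set xs \<subseteq> coarser S le Y \<longrightarrow>
        (\<forall>P\<in>Q X. f X xs P = f Y xs (margl E Emap X Y P))))"

definition ys_action ::
  "('a \<Rightarrow> 'b set) \<Rightarrow> ('a \<Rightarrow> 'a \<Rightarrow> 'b \<Rightarrow> 'b) \<Rightarrow> real \<Rightarrow> 'a \<Rightarrow> 'a \<Rightarrow> (('b \<Rightarrow> real) \<Rightarrow> real) \<Rightarrow> ('b \<Rightarrow> real) \<Rightarrow> real" where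
  "ys_action E Emap \<alpha> X Y g P = (\<Sum>y\<in>E Y. (margl E Emap X Y P y) powr \<alpha> * g (condl E Emap X Y P y))"

definition cobdry ::
  "'a set \<Rightarrow> ('a \<Rightarrow> 'a \<Rightarrow> bool) \<Rightarrow> ('a \<Rightarrow> 'b set) \<Rightarrow> ('a \<Rightarrow> 'a \<Rightarrow> 'b \<Rightarrow> 'b) \<Rightarrow> ('a \<Rightarrow> ('b \<Rightarrow> real) set)
    \<Rightarrow> real \<Rightarrow> nat \<Rightarrow> ('a, 'b) cochain \<Rightarrow> ('a, 'b) cochain" where
  "cobdry S le E Emap Q \<alpha> n f = (\<lambda>X xs P.
     if cvalid S le Q (Suc n) X xs P then
       ys_action E Emap \<alpha> X (hd xs) (f X (tl xs)) P
       + (\<Sum>k\<in>{1..n}. (-1::real) ^ k *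
            f X (take (k - 1) xs @ [pmeet S le (xs ! (k - 1)) (xs ! k)] @ drop (k + 1) xs) P)
       + (-1::real) ^ (Suc n) * f X (butlast xs) P
     else 0)"

definition is_cocycle ::
  "'a set \<Rightarrow> ('a \<Rightarrow> 'a \<Rightarrow> bool) \<Rightarrow> ('a \<Rightarrow> 'b set) \<Rightarrow> ('a \<Rightarrow> 'a \<Rightarrow> 'b \<Rightarrow> 'b) \<Rightarrow> ('a \<Rightarrow> ('b \<Rightarrow> real) set)
    \<Rightarrow> real \<Rightarrow> nat \<Rightarrow> ('a, 'b) cochain \<Rightarrow> bool" where
  "is_cocycle S le E Emap Q \<alpha> n f \<longleftrightarrow>
     is_cochain S le E Emap Q n f \<and> cobdry S le E Emap Q \<alpha> n f = (\<lambda>_ _ _. 0)"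

definition is_coboundary ::
  "'a set \<Rightarrow> ('a \<Rightarrow> 'a \<Rightarrow> bool) \<Rightarrow> ('a \<Rightarrow> 'b set) \<Rightarrow> ('a \<Rightarrow> 'a \<Rightarrow> 'b \<Rightarrow> 'b) \<Rightarrow> ('a \<Rightarrow> ('b \<Rightarrow> real) set)
    \<Rightarrow> real \<Rightarrow> nat \<Rightarrow> ('a, 'b) cochain \<Rightarrow> bool" where
  "is_coboundary S le E Emap Q \<alpha> n f \<longleftrightarrow>
     (if n = 0 then f = (\<lambda>_ _ _. 0)
      else (\<exists>g. is_cochain S le E Emap Q (n - 1) g \<and> f = cobdry S le E Emap Q \<alpha> (n - 1) g))"

definition pullback ::
  "'a set \<Rightarrow> ('a \<Rightarrow> 'a \<Rightarrow> bool) \<Rightarrow> ('a \<Rightarrow> 'b set) \<Rightarrow> ('a \<Rightarrow> ('b \<Rightarrow> real) set) \<Rightarrow>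
   ('a \<Rightarrow> 'c) \<Rightarrow> ('a \<Rightarrow> 'b \<Rightarrow> 'd) \<Rightarrow> nat \<Rightarrow> ('c, 'd) cochain \<Rightarrow> ('a, 'b) cochain" where
  "pullback S le E Q phi phis n f = (\<lambda>Y xs P.
     if cvalid S le Q n Y xs P then f (phi Y) (map phi xs) (mpush E phis Y P) else 0)"

definition induces_iso_in_degree ::
  "'a set \<Rightarrow> ('a \<Rightarrow> 'a \<Rightarrow> bool) \<Rightarrow> ('a \<Rightarrow> 'b set) \<Rightarrow> ('a \<Rightarrow> 'a \<Rightarrow> 'b \<Rightarrow> 'b) \<Rightarrow> ('a \<Rightarrow> ('b \<Rightarrow> real) set) \<Rightarrow>
   'c set \<Rightarrow> ('c \<Rightarrow> 'c \<Rightarrow> bool) \<Rightarrow> ('c \<Rightarrow> 'd set) \<Rightarrow> ('c \<Rightarrow> 'c \<Rightarrow> 'd \<Rightarrow> 'd) \<Rightarrow> ('c \<Rightarrow> ('d \<Rightarrow> real) set) \<Rightarrow>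
   ('a \<Rightarrow> 'c) \<Rightarrow> ('a \<Rightarrow> 'b \<Rightarrow> 'd) \<Rightarrow> real \<Rightarrow> nat \<Rightarrow> bool" where
  "induces_iso_in_degree S le E Emap Q S' le' E' Emap' Q' phi phis \<alpha> n \<longleftrightarrow>
     \<comment> \<open>phi^* maps cochains to cochains\<close>
     (\<forall>f. is_cochain S' le' E' Emap' Q' n f \<longrightarrow> is_cochain S le E Emap Q n (pullback S le E Q phi phis n f)) \<and>
     \<comment> \<open>phi^* commutes with the is_coboundary\<close>
     (\<forall>f. is_cochain S' le' E' Emap' Q' n f \<longrightarrow>
        pullback S le E Q phi phis (Suc n) (cobdry S' le' E' Emap' Q' \<alpha> n f)
        = cobdry S le E Emap Q \<alpha> n (pullback S le E Q phi phis n f)) \<and>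
     \<comment> \<open>injective on cohomology\<close>
     (\<forall>f. is_cocycle S' le' E' Emap' Q' \<alpha> n f \<and>
          is_coboundary S le E Emap Q \<alpha> n (pullback S le E Q phi phis n f) \<longrightarrow>
          is_coboundary S' le' E' Emap' Q' \<alpha> n f) \<and>
     \<comment> \<open>surjective on cohomology\<close>
     (\<forall>g. is_cocycle S le E Emap Q \<alpha> n g \<longrightarrow>
        (\<exists>f. is_cocycle S' le' E' Emap' Q' \<alpha> n f \<and>
             is_coboundary S le E Emap Q \<alpha> n (\<lambda>Y xs P. g Y xs P - pullback S le E Q phi phis n f Y xs P)))"

end

theory Submission
  imports Defs
begin

(* The pullback phi^* only evaluates cochains at pushed-forward laws m_Y(P). Naturality of
   phi^# makes m commute with marginalization, and injectivity of phi^# on each E(X) makes it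
   commute with conditioning; as phi also preserves the products X_k X_{k+1}, phi^* commutes
   with the coboundary. For an isomorphism, the inverse psi satisfies the same hypotheses,
   and the hypothesis Q'_{phi X} = m_X(Q_X) makes psi^* and phi^* mutually inverse on
   cochains, hence on cohomology. *)

lemma info_structureD:
  assumes "info_structure S le one E Emap"
  shows "\<forall>X\<in>S. \<forall>Y\<in>S. le X Y \<and> le Y X \<longrightarrow> X = Y"
    and "\<forall>X\<in>S. \<forall>Y\<in>S. \<forall>Z\<in>S. le X Y \<and> le Y Z \<longrightarrow> le X Z"
    and "\<forall>X\<in>S. \<forall>Y\<in>S. common_refinement S le X Y \<longrightarrow> (\<exists>W. is_pmeet S le X Y W)"
    and "\<forall>X\<in>S. \<forall>Y\<in>S. le X Y \<longrightarrow> (\<forall>x\<in>E X. Emap X Y x \<in> E Y)"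
  using assms unfolding info_structure_def by - (elim conjE, assumption)+

lemma info_morphismD:
  assumes "info_morphism S le one E Emap S' le' one' E' Emap' phi phis"
  shows "\<forall>X\<in>S. phi X \<in> S'"
    and "\<forall>X\<in>S. \<forall>Y\<in>S. le X Y \<longrightarrow> le' (phi X) (phi Y)"
    and "\<forall>X\<in>S. \<forall>Y\<in>S. common_refinement S le X Y \<longrightarrow>
           is_pmeet S' le' (phi X) (phi Y) (phi (pmeet S le X Y))"
    and "\<forall>X\<in>S. phis X ` E X = E' (phi X)"
    and "\<forall>X\<in>S. \<forall>Y\<in>S. le X Y \<longrightarrow>
           (\<forall>x\<in>E X. Emap' (phi X) (phi Y) (phis X x) = phis Y (Emap X Y x))"
  using assms unfolding info_morphism_def by - (elim conjE, assumption)+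

lemma is_cochainD:
  assumes "is_cochain S le E Emap Q n f"
  shows "\<not> cvalid S le Q n X xs P \<Longrightarrow> f X xs P = 0"
    and "\<lbrakk>X \<in> S; length xs = n; set xs \<subseteq> coarser S le X\<rbrakk> \<Longrightarrow>
           f X xs \<in> borel_measurable (restrict_space borel (Q X))"
    and "\<lbrakk>X \<in> S; Y \<in> S; le X Y; length xs = n; set xs \<subseteq> coarser S le Y; P \<in> Q X\<rbrakk> \<Longrightarrow>
           f X xs P = f Y xs (margl E Emap X Y P)"
  using assms unfolding is_cochain_def by blast+

lemma pmeet_eqI:
  assumes "info_structure S le one E Emap" and W: "is_pmeet S le X Y W"
  shows "pmeet S le X Y = W"
  unfolding pmeet_def
proof (rule the_equality)
  fix V assume "is_pmeet S le X Y V"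
  with W have "V \<in> S" "W \<in> S" "le V W" "le W V" unfolding is_pmeet_def by auto
  then show "V = W" using info_structureD(1)[OF assms(1)] by blast
qed (fact W)

lemma common_refinement_coarser:
  "\<lbrakk>Y \<in> S; A \<in> coarser S le Y; B \<in> coarser S le Y\<rbrakk> \<Longrightarrow> common_refinement S le A B"
  unfolding coarser_def common_refinement_def by blast

lemma pmeet_coarser:
  assumes IS: "info_structure S le one E Emap" and Y: "Y \<in> S"
    and A: "A \<in> coarser S le Y" and B: "B \<in> coarser S le Y"
  shows "pmeet S le A B \<in> coarser S le Y"
proof -
  have "A \<in> S" "B \<in> S" using A B unfolding coarser_def by auto
  then obtain W where W: "is_pmeet S le A B W"
    using info_structureD(3)[OF IS] common_refinement_coarser[OF Y A B] by blast
  then show ?thesis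
    using pmeet_eqI[OF IS W] A B Y unfolding is_pmeet_def coarser_def by blast
qed

(* The inner face [X_1|...|X_k X_{k+1}|...|X_n] of the coboundary, with k counted from 1. *)
abbreviation merge_adjacent :: "'a set \<Rightarrow> ('a \<Rightarrow> 'a \<Rightarrow> bool) \<Rightarrow> nat \<Rightarrow> 'a list \<Rightarrow> 'a list" where
  "merge_adjacent S le k xs \<equiv> take (k - 1) xs @ [pmeet S le (xs ! (k - 1)) (xs ! k)] @ drop (k + 1) xs"

lemma cvalid_merge_adjacent:
  assumes IS: "info_structure S le one E Emap"
    and cv: "cvalid S le Q (Suc n) Y xs P" and k: "k \<in> {1..n}"
  shows "cvalid S le Q n Y (merge_adjacent S le k xs) P"
proof -
  have Y: "Y \<in> S" and len: "length xs = Suc n" and xs: "set xs \<subseteq> coarser S le Y"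
    using cv unfolding cvalid_def by auto
  have "xs ! (k - 1) \<in> coarser S le Y" "xs ! k \<in> coarser S le Y"
    using k len xs by (auto simp: subset_iff)
  then have "pmeet S le (xs ! (k - 1)) (xs ! k) \<in> coarser S le Y"
    by (rule pmeet_coarser[OF IS Y])
  then show ?thesis
    using cv k len xs unfolding cvalid_def by (auto dest: in_set_takeD in_set_dropD)
qed

lemma sum_fibres_comp:
  assumes "finite A" "finite B" "g ` A \<subseteq> B"
  shows "(\<Sum>y\<in>{y \<in> B. h y = z}. \<Sum>x\<in>{x \<in> A. g x = y}. P x) = (\<Sum>x\<in>{x \<in> A. h (g x) = z}. P x)"
proof -
  have "(\<Sum>y\<in>{y \<in> B. h y = z}. \<Sum>x\<in>{x \<in> A. g x = y}. P x)
      = (\<Sum>y\<in>{y \<in> B. h y = z}. \<Sum>x\<in>{x \<in> {x \<in> A. h (g x) = z}. g x = y}. P x)"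
    by (rule sum.cong) (auto intro: sum.cong)
  also have "\<dots> = (\<Sum>x\<in>{x \<in> A. h (g x) = z}. P x)"
    using assms by (intro sum.group) auto
  finally show ?thesis .
qed

lemma mpush_inverse:
  assumes img: "phis X ` E X = E' X'" and inv: "\<forall>x\<in>E X. psis X' (phis X x) = x"
    and P: "\<forall>x. x \<notin> E X \<longrightarrow> P x = 0"
  shows "mpush E' psis X' (mpush E phis X P) = P"
proof
  fix x
  show "mpush E' psis X' (mpush E phis X P) x = P x"
  proof (cases "x \<in> E X")
    case True
    have "{x' \<in> E' X'. psis X' x' = x} = {phis X x}" unfolding img[symmetric] using True inv by auto
    moreover have "{y \<in> E X. phis X y = phis X x} = {x}" using True inv by (auto, metis)
    ultimately show ?thesis unfolding mpush_def by simp
  next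
    case False
    then have none: "{x' \<in> E' X'. psis X' x' = x} = {}" unfolding img[symmetric] using inv by auto
    show ?thesis using False P unfolding mpush_def none by simp
  qed
qed

lemma pullback_zero: "pullback S le E Q phi phis n (\<lambda>_ _ _. 0) = (\<lambda>_ _ _. 0)"
  unfolding pullback_def by (intro ext) simp

lemma cobdry_zero: "cobdry S le E Emap Q \<alpha> n (\<lambda>_ _ _. 0) = (\<lambda>_ _ _. 0)"
  unfolding cobdry_def ys_action_def by (intro ext) simp

lemma is_coboundary_zero: "is_coboundary S le E Emap Q \<alpha> n (\<lambda>_ _ _. 0)"
proof -
  have "is_cochain S le E Emap Q (n - 1) (\<lambda>_ _ _. 0) \<and>
      (\<lambda>_ _ _. 0) = cobdry S le E Emap Q \<alpha> (n - 1) (\<lambda>_ _ _. 0)"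
    unfolding is_cochain_def by (simp add: cobdry_zero)
  then show ?thesis unfolding is_coboundary_def by auto
qed

lemma pullback_pullback_inverse:
  assumes f: "is_cochain S' le' E' Emap' Q' n f"
    and psi: "\<And>X'. X' \<in> S' \<Longrightarrow> psi X' \<in> S \<and> phi (psi X') = X'"
    and psi_coarser: "\<And>X' Z. X' \<in> S' \<Longrightarrow> Z \<in> coarser S' le' X' \<Longrightarrow> psi Z \<in> coarser S le (psi X')"
    and psis_Q: "\<And>X' P'. X' \<in> S' \<Longrightarrow> P' \<in> Q' X' \<Longrightarrow> mpush E' psis X' P' \<in> Q (psi X')"
    and inv: "\<And>X' P'. X' \<in> S' \<Longrightarrow> P' \<in> Q' X' \<Longrightarrow> mpush E phis (psi X') (mpush E' psis X' P') = P'"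
  shows "pullback S' le' E' Q' psi psis n (pullback S le E Q phi phis n f) = f"
proof (intro ext)
  fix X' xs P'
  show "pullback S' le' E' Q' psi psis n (pullback S le E Q phi phis n f) X' xs P' = f X' xs P'"
  proof (cases "cvalid S' le' Q' n X' xs P'")
    case True
    then have X': "X' \<in> S'" and xs: "set xs \<subseteq> coarser S' le' X'" and P': "P' \<in> Q' X'"
      unfolding cvalid_def by auto
    have "cvalid S le Q n (psi X') (map psi xs) (mpush E' psis X' P')"
      using True psi psi_coarser psis_Q unfolding cvalid_def by auto
    moreover have "map phi (map psi xs) = xs"
      using xs psi by (induction xs) (auto simp: coarser_def)
    ultimately show ?thesis using True psi[OF X'] inv[OF X' P'] unfolding pullback_def by simp
  next
    case False
    then show ?thesis using is_cochainD(1)[OF f] unfolding pullback_def by simp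
  qed
qed

locale finite_info_morphism =
  fixes S :: "'a set" and le :: "'a \<Rightarrow> 'a \<Rightarrow> bool" and one :: 'a
    and E :: "'a \<Rightarrow> 'b set" and Emap :: "'a \<Rightarrow> 'a \<Rightarrow> 'b \<Rightarrow> 'b"
    and S' :: "'c set" and le' :: "'c \<Rightarrow> 'c \<Rightarrow> bool" and one' :: 'c
    and E' :: "'c \<Rightarrow> 'd set" and Emap' :: "'c \<Rightarrow> 'c \<Rightarrow> 'd \<Rightarrow> 'd"
    and phi :: "'a \<Rightarrow> 'c" and phis :: "'a \<Rightarrow> 'b \<Rightarrow> 'd"
  assumes IS: "info_structure S le one E Emap"
    and IS': "info_structure S' le' one' E' Emap'"
    and finite_E: "\<forall>X\<in>S. finite (E X)"
    and mor: "info_morphism S le one E Emap S' le' one' E' Emap' phi phis"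
begin

lemma phi_in: "X \<in> S \<Longrightarrow> phi X \<in> S'"
  using info_morphismD(1)[OF mor] by blast

lemma phi_le: "\<lbrakk>X \<in> S; Y \<in> S; le X Y\<rbrakk> \<Longrightarrow> le' (phi X) (phi Y)"
  using info_morphismD(2)[OF mor] by blast

lemma phis_image: "X \<in> S \<Longrightarrow> phis X ` E X = E' (phi X)"
  using info_morphismD(4)[OF mor] by blast

lemma phis_natural:
  "\<lbrakk>X \<in> S; Y \<in> S; le X Y; x \<in> E X\<rbrakk> \<Longrightarrow> Emap' (phi X) (phi Y) (phis X x) = phis Y (Emap X Y x)"
  using info_morphismD(5)[OF mor] by blast

lemma Emap_in: "\<lbrakk>X \<in> S; Y \<in> S; le X Y; x \<in> E X\<rbrakk> \<Longrightarrow> Emap X Y x \<in> E Y"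
  using info_structureD(4)[OF IS] by blast

lemma S_le_trans: "\<lbrakk>X \<in> S; Y \<in> S; Z \<in> S; le X Y; le Y Z\<rbrakk> \<Longrightarrow> le X Z"
  using info_structureD(2)[OF IS] by blast

lemma phi_coarser: "\<lbrakk>X \<in> S; Z \<in> coarser S le X\<rbrakk> \<Longrightarrow> phi Z \<in> coarser S' le' (phi X)"
  unfolding coarser_def using phi_in phi_le by blast

lemma phi_pmeet:
  assumes Y: "Y \<in> S" and A: "A \<in> coarser S le Y" and B: "B \<in> coarser S le Y"
  shows "phi (pmeet S le A B) = pmeet S' le' (phi A) (phi B)"
proof -
  have "is_pmeet S' le' (phi A) (phi B) (phi (pmeet S le A B))"
    using info_morphismD(3)[OF mor] common_refinement_coarser[OF Y A B] A B
    unfolding coarser_def by blast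
  from pmeet_eqI[OF IS' this] show ?thesis by simp
qed

lemma map_phi_merge_adjacent:
  assumes Y: "Y \<in> S" and xs: "set xs \<subseteq> coarser S le Y" and k: "1 \<le> k" "k < length xs"
  shows "map phi (merge_adjacent S le k xs) = merge_adjacent S' le' k (map phi xs)"
proof -
  have "xs ! (k - 1) \<in> coarser S le Y" "xs ! k \<in> coarser S le Y"
    using k xs by (auto simp: subset_iff)
  then show ?thesis using k phi_pmeet[OF Y] by (simp add: take_map drop_map)
qed

lemma margl_mpush:
  assumes X: "X \<in> S" and Y: "Y \<in> S" and le: "le X Y"
  shows "margl E' Emap' (phi X) (phi Y) (mpush E phis X P) = mpush E phis Y (margl E Emap X Y P)"
proof
  fix d
  have fin: "finite (E X)" "finite (E Y)" "finite (E' (phi X))"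
    using finite_E X Y finite_imageI[of "E X" "phis X"] phis_image[OF X] by auto
  show "margl E' Emap' (phi X) (phi Y) (mpush E phis X P) d = mpush E phis Y (margl E Emap X Y P) d"
  proof (cases "d \<in> E' (phi Y)")
    case True
    have "margl E' Emap' (phi X) (phi Y) (mpush E phis X P) d
        = (\<Sum>x\<in>{x \<in> E X. Emap' (phi X) (phi Y) (phis X x) = d}. P x)"
      using True fin phis_image[OF X] unfolding margl_def mpush_def
      by (simp add: sum_fibres_comp)
    also have "\<dots> = (\<Sum>x\<in>{x \<in> E X. phis Y (Emap X Y x) = d}. P x)"
      using phis_natural[OF X Y le] by (intro sum.cong) auto
    also have "\<dots> = (\<Sum>y\<in>{y \<in> E Y. phis Y y = d}. \<Sum>x\<in>{x \<in> E X. Emap X Y x = y}. P x)"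
      using fin Emap_in[OF X Y le] by (simp add: sum_fibres_comp image_subset_iff)
    also have "\<dots> = mpush E phis Y (margl E Emap X Y P) d"
      unfolding mpush_def margl_def by (intro sum.cong) auto
    finally show ?thesis .
  next
    case False
    then have none: "{y \<in> E Y. phis Y y = d} = {}" using phis_image[OF Y] by auto
    show ?thesis using False unfolding margl_def mpush_def none by simp
  qed
qed

end

locale injective_info_morphism = finite_info_morphism +
  assumes inj_phis: "X \<in> S \<Longrightarrow> inj_on (phis X) (E X)"
begin

lemma mpush_phis:
  assumes X: "X \<in> S" and x: "x \<in> E X"
  shows "mpush E phis X P (phis X x) = P x"
proof -
  have "{y \<in> E X. phis X y = phis X x} = {x}"
    using inj_phis[OF X] x unfolding inj_on_def by auto
  then show ?thesis unfolding mpush_def by simp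
qed

lemma margl_mpush_phis:
  "\<lbrakk>X \<in> S; Y \<in> S; le X Y; y \<in> E Y\<rbrakk> \<Longrightarrow>
     margl E' Emap' (phi X) (phi Y) (mpush E phis X P) (phis Y y) = margl E Emap X Y P y"
  using margl_mpush mpush_phis by simp

lemma condl_mpush_phis:
  assumes X: "X \<in> S" and Y: "Y \<in> S" and le: "le X Y" and y: "y \<in> E Y"
  shows "condl E' Emap' (phi X) (phi Y) (mpush E phis X P) (phis Y y) = mpush E phis X (condl E Emap X Y P y)"
proof
  fix d
  show "condl E' Emap' (phi X) (phi Y) (mpush E phis X P) (phis Y y) d = mpush E phis X (condl E Emap X Y P y) d"
  proof (cases "d \<in> E' (phi X)")
    case True
    then obtain x where x: "x \<in> E X" "d = phis X x" using phis_image[OF X] by blast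
    have "Emap' (phi X) (phi Y) d = phis Y y \<longleftrightarrow> Emap X Y x = y"
      using x phis_natural[OF X Y le x(1)] inj_phis[OF Y] Emap_in[OF X Y le x(1)] y
      unfolding inj_on_def by auto
    then show ?thesis
      using True x mpush_phis[OF X x(1)] margl_mpush_phis[OF X Y le y] unfolding condl_def by simp
  next
    case False
    then have none: "{x \<in> E X. phis X x = d} = {}" using phis_image[OF X] by auto
    show ?thesis using False unfolding condl_def mpush_def none by simp
  qed
qed

lemma ys_action_mpush:
  assumes X: "X \<in> S" and Y: "Y \<in> S" and le: "le X Y"
    and g: "\<And>y. \<lbrakk>y \<in> E Y; margl E Emap X Y P y \<noteq> 0\<rbrakk> \<Longrightarrow>
              g (condl E Emap X Y P y) = g' (mpush E phis X (condl E Emap X Y P y))"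
  shows "ys_action E' Emap' \<alpha> (phi X) (phi Y) g' (mpush E phis X P) = ys_action E Emap \<alpha> X Y g P"
proof -
  have "ys_action E' Emap' \<alpha> (phi X) (phi Y) g' (mpush E phis X P)
     = (\<Sum>y\<in>E Y. margl E' Emap' (phi X) (phi Y) (mpush E phis X P) (phis Y y) powr \<alpha> *
           g' (condl E' Emap' (phi X) (phi Y) (mpush E phis X P) (phis Y y)))"
    unfolding ys_action_def phis_image[OF Y, symmetric] using inj_phis[OF Y] by (simp add: sum.reindex)
  also have "\<dots> = ys_action E Emap \<alpha> X Y g P"
    unfolding ys_action_def
  proof (rule sum.cong)
    fix y assume y: "y \<in> E Y"
    show "margl E' Emap' (phi X) (phi Y) (mpush E phis X P) (phis Y y) powr \<alpha> *
           g' (condl E' Emap' (phi X) (phi Y) (mpush E phis X P) (phis Y y))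
        = margl E Emap X Y P y powr \<alpha> * g (condl E Emap X Y P y)"
      using margl_mpush_phis[OF X Y le y] condl_mpush_phis[OF X Y le y] g[OF y]
      by (cases "margl E Emap X Y P y = 0") auto
  qed simp
  finally show ?thesis .
qed

end

locale cochain_pullback = injective_info_morphism +
  fixes Q :: "'a \<Rightarrow> ('b \<Rightarrow> real) set" and Q' :: "'c \<Rightarrow> ('d \<Rightarrow> real) set"
  assumes PF: "prob_functor S le E Emap Q"
    and AD: "adapted S le E Emap Q"
    and Q'_phi: "\<forall>X\<in>S. Q' (phi X) = mpush E phis X ` Q X"
begin

abbreviation phi_star :: "nat \<Rightarrow> ('c, 'd) cochain \<Rightarrow> ('a, 'b) cochain" where
  "phi_star \<equiv> pullback S le E Q phi phis"

lemma Q_laws: "\<lbrakk>X \<in> S; P \<in> Q X\<rbrakk> \<Longrightarrow> P \<in> law_simplex E X"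
  using PF unfolding prob_functor_def by blast

lemma margl_in_Q: "\<lbrakk>X \<in> S; Y \<in> S; le X Y; P \<in> Q X\<rbrakk> \<Longrightarrow> margl E Emap X Y P \<in> Q Y"
  using PF unfolding prob_functor_def by blast

lemma condl_in_Q:
  "\<lbrakk>X \<in> S; Y \<in> S; le X Y; P \<in> Q X; y \<in> E Y; margl E Emap X Y P y \<noteq> 0\<rbrakk> \<Longrightarrow> condl E Emap X Y P y \<in> Q X"
  using AD unfolding adapted_def by blast

lemma mpush_in_Q': "\<lbrakk>X \<in> S; P \<in> Q X\<rbrakk> \<Longrightarrow> mpush E phis X P \<in> Q' (phi X)"
  using Q'_phi by blast

lemma cvalid_mpush:
  "cvalid S le Q n X xs P \<Longrightarrow> cvalid S' le' Q' n (phi X) (map phi xs) (mpush E phis X P)"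
  unfolding cvalid_def using phi_coarser phi_in mpush_in_Q' by auto

lemma mpush_measurable:
  assumes "X \<in> S"
  shows "mpush E phis X \<in> measurable (restrict_space borel (Q X)) (restrict_space borel (Q' (phi X)))"
proof (rule measurable_restrict_space3)
  have "continuous_on UNIV (mpush E phis X)"
    unfolding mpush_def
    by (intro continuous_on_coordinatewise_then_product continuous_on_sum continuous_on_product_coordinates)
  then show "mpush E phis X \<in> borel \<rightarrow>\<^sub>M borel" by (rule borel_measurable_continuous_onI)
qed (use mpush_in_Q' assms in blast)

lemma pullback_cochain:
  assumes f: "is_cochain S' le' E' Emap' Q' n f"
  shows "is_cochain S le E Emap Q n (phi_star n f)"
  unfolding is_cochain_def
proof (intro conjI allI ballI impI)
  fix X xs P assume "\<not> cvalid S le Q n X xs P"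
  then show "phi_star n f X xs P = 0" unfolding pullback_def by simp
next
  fix X xs assume X: "X \<in> S" and xs: "length xs = n \<and> set xs \<subseteq> coarser S le X"
  then have "set (map phi xs) \<subseteq> coarser S' le' (phi X)" using phi_coarser by auto
  then have "f (phi X) (map phi xs) \<in> borel_measurable (restrict_space borel (Q' (phi X)))"
    using is_cochainD(2)[OF f phi_in[OF X]] xs by simp
  then have "(\<lambda>P. f (phi X) (map phi xs) (mpush E phis X P)) \<in> borel_measurable (restrict_space borel (Q X))"
    using measurable_comp[OF mpush_measurable[OF X]] by (simp add: comp_def)
  then show "phi_star n f X xs \<in> borel_measurable (restrict_space borel (Q X))"
    by (rule measurable_cong[THEN iffD1, rotated])
      (use X xs in \<open>auto simp: pullback_def cvalid_def space_restrict_space\<close>)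
next
  fix X Y xs P assume X: "X \<in> S" and Y: "Y \<in> S" and le: "le X Y"
    and xs: "length xs = n \<and> set xs \<subseteq> coarser S le Y" and P: "P \<in> Q X"
  have "set xs \<subseteq> coarser S le X" using xs S_le_trans[OF X Y] le unfolding coarser_def by auto
  then have "cvalid S le Q n X xs P" "cvalid S le Q n Y xs (margl E Emap X Y P)"
    using X Y xs P margl_in_Q[OF X Y le P] unfolding cvalid_def by auto
  moreover have "set (map phi xs) \<subseteq> coarser S' le' (phi Y)" using xs phi_coarser[OF Y] by auto
  then have "f (phi X) (map phi xs) (mpush E phis X P)
      = f (phi Y) (map phi xs) (margl E' Emap' (phi X) (phi Y) (mpush E phis X P))"
    using is_cochainD(3)[OF f phi_in[OF X] phi_in[OF Y] phi_le[OF X Y le]] xs mpush_in_Q'[OF X P]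
    by simp
  ultimately show "phi_star n f X xs P = phi_star n f Y xs (margl E Emap X Y P)"
    using margl_mpush[OF X Y le] unfolding pullback_def by simp
qed

lemma pullback_cobdry:
  "phi_star (Suc n) (cobdry S' le' E' Emap' Q' \<alpha> n f) = cobdry S le E Emap Q \<alpha> n (phi_star n f)"
proof (intro ext)
  fix Y xs P
  show "phi_star (Suc n) (cobdry S' le' E' Emap' Q' \<alpha> n f) Y xs P = cobdry S le E Emap Q \<alpha> n (phi_star n f) Y xs P"
  proof (cases "cvalid S le Q (Suc n) Y xs P")
    case False
    then show ?thesis unfolding pullback_def cobdry_def by simp
  next
    case cv: True
    then have Y: "Y \<in> S" and len: "length xs = Suc n" and xs: "set xs \<subseteq> coarser S le Y" and P: "P \<in> Q Y"
      unfolding cvalid_def by auto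
    obtain Z zs where Zzs: "xs = Z # zs" using len by (cases xs) auto
    with xs have Z: "Z \<in> S" "le Y Z" and zs: "set zs \<subseteq> coarser S le Y" unfolding coarser_def by auto
    have "ys_action E' Emap' \<alpha> (phi Y) (phi Z) (f (phi Y) (map phi zs)) (mpush E phis Y P)
      = ys_action E Emap \<alpha> Y Z (phi_star n f Y zs) P"
      by (rule ys_action_mpush[OF Y Z])
        (use condl_in_Q[OF Y Z P] zs len Y Zzs in \<open>auto simp: pullback_def cvalid_def\<close>)
    then have action: "ys_action E' Emap' \<alpha> (phi Y) (hd (map phi xs)) (f (phi Y) (tl (map phi xs))) (mpush E phis Y P)
      = ys_action E Emap \<alpha> Y (hd xs) (phi_star n f Y (tl xs)) P"
      using Zzs by simp
    have faces: "(\<Sum>k\<in>{1..n}. (-1::real) ^ k * f (phi Y) (merge_adjacent S' le' k (map phi xs)) (mpush E phis Y P))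
        = (\<Sum>k\<in>{1..n}. (-1::real) ^ k * phi_star n f Y (merge_adjacent S le k xs) P)"
    proof (rule sum.cong)
      fix k assume k: "k \<in> {1..n}"
      then have "1 \<le> k" "k < length xs" using len by auto
      then have "map phi (merge_adjacent S le k xs) = merge_adjacent S' le' k (map phi xs)"
        by (rule map_phi_merge_adjacent[OF Y xs])
      with cvalid_merge_adjacent[OF IS cv k]
      show "(-1::real) ^ k * f (phi Y) (merge_adjacent S' le' k (map phi xs)) (mpush E phis Y P)
          = (-1::real) ^ k * phi_star n f Y (merge_adjacent S le k xs) P"
        unfolding pullback_def by (simp only: if_True)
    qed simp
    have last: "f (phi Y) (butlast (map phi xs)) (mpush E phis Y P) = phi_star n f Y (butlast xs) P"
      using Y P len xs unfolding pullback_def cvalid_def by (auto simp: map_butlast dest: in_set_butlastD)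
    have "phi_star (Suc n) g Y xs P = g (phi Y) (map phi xs) (mpush E phis Y P)" for g
      using cv unfolding pullback_def by simp
    then show ?thesis
      using cv cvalid_mpush[OF cv] action faces last unfolding cobdry_def by (simp only: if_True)
  qed
qed

lemma pullback_cocycle:
  assumes "is_cocycle S' le' E' Emap' Q' \<alpha> n f"
  shows "is_cocycle S le E Emap Q \<alpha> n (phi_star n f)"
  using assms pullback_cochain pullback_cobdry[of n \<alpha> f, symmetric] pullback_zero
  unfolding is_cocycle_def by metis

lemma pullback_coboundary:
  assumes "is_coboundary S' le' E' Emap' Q' \<alpha> n f"
  shows "is_coboundary S le E Emap Q \<alpha> n (phi_star n f)"
proof (cases n)
  case 0
  with assms show ?thesis unfolding is_coboundary_def by (simp add: pullback_zero)
next
  case (Suc m)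
  with assms obtain g where "is_cochain S' le' E' Emap' Q' m g" "f = cobdry S' le' E' Emap' Q' \<alpha> m g"
    unfolding is_coboundary_def by auto
  with Suc show ?thesis
    unfolding is_coboundary_def by (auto simp: pullback_cobdry intro: pullback_cochain)
qed

lemma mpush_left_inverse:
  assumes X: "X \<in> S" and P: "P \<in> Q X" and inv: "\<forall>x\<in>E X. psis (phi X) (phis X x) = x"
  shows "mpush E' psis (phi X) (mpush E phis X P) = P"
proof (rule mpush_inverse[of phis X E E' "phi X" psis P, OF phis_image[OF X] inv])
  show "\<forall>x. x \<notin> E X \<longrightarrow> P x = 0" using Q_laws[OF X P] unfolding law_simplex_def by blast
qed

lemma mpush_inverse_image:
  assumes X: "X \<in> S" and inv: "\<forall>x\<in>E X. psis (phi X) (phis X x) = x"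
  shows "mpush E' psis (phi X) ` Q' (phi X) = Q X"
  using Q'_phi X mpush_left_inverse[of X _ psis, OF X _ inv] by (simp add: image_image)

end

locale info_iso_pullback =
  fwd: cochain_pullback S le one E Emap S' le' one' E' Emap' phi phis Q Q' +
  bwd: cochain_pullback S' le' one' E' Emap' S le one E Emap psi psis Q' Q
  for S le one E Emap S' le' one' E' Emap' phi phis psi psis Q Q' +
  assumes psi_phi: "\<forall>X\<in>S. psi (phi X) = X" and phi_psi: "\<forall>X'\<in>S'. phi (psi X') = X'"
    and psis_phis: "\<forall>X\<in>S. \<forall>x\<in>E X. psis (phi X) (phis X x) = x"
    and phis_psis: "\<forall>X'\<in>S'. \<forall>x\<in>E' X'. phis (psi X') (psis X' x) = x"
begin

lemma psi_star_phi_star: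
  "is_cochain S' le' E' Emap' Q' n f \<Longrightarrow> bwd.phi_star n (fwd.phi_star n f) = f"
  by (rule pullback_pullback_inverse[OF _ _ bwd.phi_coarser bwd.mpush_in_Q' bwd.mpush_left_inverse])
    (use bwd.phi_in phi_psi phis_psis in auto)

lemma phi_star_psi_star:
  "is_cochain S le E Emap Q n g \<Longrightarrow> fwd.phi_star n (bwd.phi_star n g) = g"
  by (rule pullback_pullback_inverse[OF _ _ fwd.phi_coarser fwd.mpush_in_Q' fwd.mpush_left_inverse])
    (use fwd.phi_in psi_phi psis_phis in auto)

lemma induces_iso: "induces_iso_in_degree S le E Emap Q S' le' E' Emap' Q' phi phis \<alpha> n"
  unfolding induces_iso_in_degree_def
proof (intro conjI allI impI)
  fix f assume f: "is_cocycle S' le' E' Emap' Q' \<alpha> n f \<and> is_coboundary S le E Emap Q \<alpha> n (fwd.phi_star n f)"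
  then have "is_coboundary S' le' E' Emap' Q' \<alpha> n (bwd.phi_star n (fwd.phi_star n f))"
    by (intro bwd.pullback_coboundary) blast
  moreover have "bwd.phi_star n (fwd.phi_star n f) = f"
    using f psi_star_phi_star unfolding is_cocycle_def by blast
  ultimately show "is_coboundary S' le' E' Emap' Q' \<alpha> n f" by simp
next
  fix g assume g: "is_cocycle S le E Emap Q \<alpha> n g"
  then have "(\<lambda>Y xs P. g Y xs P - fwd.phi_star n (bwd.phi_star n g) Y xs P) = (\<lambda>_ _ _. 0)"
    using phi_star_psi_star unfolding is_cocycle_def by simp
  with bwd.pullback_cocycle[OF g] show "\<exists>f. is_cocycle S' le' E' Emap' Q' \<alpha> n f \<and>
      is_coboundary S le E Emap Q \<alpha> n (\<lambda>Y xs P. g Y xs P - fwd.phi_star n f Y xs P)"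
    using is_coboundary_zero by (intro exI[of _ "bwd.phi_star n g"]) simp
qed (use fwd.pullback_cochain fwd.pullback_cobdry in auto)

end

theorem corollary4p4:
  fixes S :: "'a set" and le :: "'a \<Rightarrow> 'a \<Rightarrow> bool" and one :: 'a
    and E :: "'a \<Rightarrow> 'b set" and Emap :: "'a \<Rightarrow> 'a \<Rightarrow> 'b \<Rightarrow> 'b"
    and S' :: "'c set" and le' :: "'c \<Rightarrow> 'c \<Rightarrow> bool" and one' :: 'c
    and E' :: "'c \<Rightarrow> 'd set" and Emap' :: "'c \<Rightarrow> 'c \<Rightarrow> 'd \<Rightarrow> 'd"
    and phi :: "'a \<Rightarrow> 'c" and phis :: "'a \<Rightarrow> 'b \<Rightarrow> 'd"
    and Q :: "'a \<Rightarrow> ('b \<Rightarrow> real) set" and Q' :: "'c \<Rightarrow> ('d \<Rightarrow> real) set"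
    and \<alpha> :: real
  assumes "info_structure S le one E Emap"
    and "info_structure S' le' one' E' Emap'"
    and "\<forall>X\<in>S. finite (E X)"
    and "\<forall>X'\<in>S'. finite (E' X')"
    and "info_iso S le one E Emap S' le' one' E' Emap' phi phis"
    and "prob_functor S le E Emap Q" and "adapted S le E Emap Q"
    and "prob_functor S' le' E' Emap' Q'" and "adapted S' le' E' Emap' Q'"
    and "\<forall>X\<in>S. Q' (phi X) = mpush E phis X ` Q X"
    and "\<alpha> > 0"
  shows "\<forall>n. induces_iso_in_degree S le E Emap Q S' le' E' Emap' Q' phi phis \<alpha> n"
proof -
  obtain psi psis where mor: "info_morphism S le one E Emap S' le' one' E' Emap' phi phis"
    and mor': "info_morphism S' le' one' E' Emap' S le one E Emap psi psis"
    and inv: "\<forall>X\<in>S. psi (phi X) = X" "\<forall>X'\<in>S'. phi (psi X') = X'"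
      "\<forall>X\<in>S. \<forall>x\<in>E X. psis (phi X) (phis X x) = x" "\<forall>X'\<in>S'. \<forall>x\<in>E' X'. phis (psi X') (psis X' x) = x"
    using assms(5) unfolding info_iso_def by blast
  have inj: "\<forall>X\<in>S. inj_on (phis X) (E X)" "\<forall>X'\<in>S'. inj_on (psis X') (E' X')"
    using inv(3,4) by (metis inj_onI)+
  interpret fwd: cochain_pullback S le one E Emap S' le' one' E' Emap' phi phis Q Q'
    by unfold_locales (use assms(1-3,6,7,10) mor inj(1) in auto)
  have "\<forall>X'\<in>S'. Q (psi X') = mpush E' psis X' ` Q' X'"
    using fwd.mpush_inverse_image inv(2,3) info_morphismD(1)[OF mor'] by metis
  then interpret info_iso_pullback S le one E Emap S' le' one' E' Emap' phi phis psi psis Q Q'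
    by unfold_locales (use assms(1-4,6-10) mor mor' inj inv in auto)
  show ?thesis using induces_iso by blast
qed

end
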